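(* Let $A=\mathrm{diag}(G_1,\dots,G_m,[1])\in\mathbb{R}^{n\times n}$ (where the trailing block $[1]$ may or may not be present), with $G_j=\begin{bmatrix}c_j&s_j\\-s_j&c_j\end{bmatrix}$, $c_j^2+s_j^2=1$, $s_j\neq 0$, and $0<c_1<c_2<\cdots<c_m$. Let $v_0\in\mathbb{R}^n$ be a unit norm vector with $d(A,v_0)\geq 2$ and $v_0^{(1)}\neq 0$, and run the iteration ACI($1$) below. Then $\alpha_k\to c_1$ and $\beta_k\to c_1$, and every limit vector $v_*$ of $\{v_k\}$ satisfies $v_*^{(j)}=0$ for all blocks $j\geq 2$ and $\|v_*^{(1)}\|=1$.
   Context: Block partitioning: every $v\in\mathbb{R}^n$ is written as $v=[v^{(1)};\dots;v^{(m)};v^{(m+1)}]$ with $v^{(j)}\in\mathbb{R}^2$ for $j=1,\dots,m$ (conforming with the blocks $G_j$) and $v^{(m+1)}\in\mathbb{R}$ (present only if the block $[1]$ is present). ACI($1$): for $k=0,1,2,\dots$: $\widetilde w_k=(A-\alpha_kI)v_k$ with $\alpha_k=v_k^TAv_k$; $w_k=\widetilde w_k/\|\widetilde w_k\|$; $\widetilde v_{k+1}=(A^T-\beta_kI)w_k$ with $\beta_k=w_k^TAw_k$; $v_{k+1}=\widetilde v_{k+1}/\|\widetilde v_{k+1}\|$. $d(A,v)$ is the grade of $v$ w.r.t. $A$ (degree of the monic polynomial $p$ of smallest degree with $p(A)v=0$); $\|\cdot\|$ is the Euclidean norm. *)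

theory Defs
  imports Complex_Main "HOL-Computational_Algebra.Polynomial"
begin

text \<open>Vectors in R^n are functions nat => real, only the indices i < n matter.
  Matrices are functions nat => nat => real (entries (i,j), i,j < n). Indices are 0-based.\<close>

definition matvec :: "nat \<Rightarrow> (nat \<Rightarrow> nat \<Rightarrow> real) \<Rightarrow> (nat \<Rightarrow> real) \<Rightarrow> (nat \<Rightarrow> real)" where
  "matvec n M v = (\<lambda>i. if i < n then (\<Sum>j<n. M i j * v j) else 0)"

definition transp :: "(nat \<Rightarrow> nat \<Rightarrow> real) \<Rightarrow> (nat \<Rightarrow> nat \<Rightarrow> real)" where
  "transp M = (\<lambda>i j. M j i)"

definition vinner :: "nat \<Rightarrow> (nat \<Rightarrow> real) \<Rightarrow> (nat \<Rightarrow> real) \<Rightarrow> real" where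
  "vinner n u v = (\<Sum>i<n. u i * v i)"

definition vnorm :: "nat \<Rightarrow> (nat \<Rightarrow> real) \<Rightarrow> real" where
  "vnorm n v = sqrt (vinner n v v)"

definition poly_app :: "nat \<Rightarrow> (nat \<Rightarrow> nat \<Rightarrow> real) \<Rightarrow> real poly \<Rightarrow> (nat \<Rightarrow> real) \<Rightarrow> (nat \<Rightarrow> real)" where
  "poly_app n M p v = (\<lambda>i. \<Sum>k\<le>degree p. coeff p k * ((matvec n M ^^ k) v) i)"

definition grade :: "nat \<Rightarrow> (nat \<Rightarrow> nat \<Rightarrow> real) \<Rightarrow> (nat \<Rightarrow> real) \<Rightarrow> nat" where
  "grade n M v = (LEAST d. \<exists>p :: real poly. lead_coeff p = 1 \<and> degree p = d \<and>
                      (\<forall>i<n. poly_app n M p v i = 0))"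

text \<open>Block diagonal matrix diag(G_1,...,G_m,[1]) (trailing block present iff tr).
  Block j (1 \<le> j \<le> m) occupies 0-based indices 2(j-1), 2(j-1)+1;
  G_j = [[c_j, s_j], [-s_j, c_j]]; the trailing [1] sits at index 2m.\<close>
definition blockA :: "nat \<Rightarrow> bool \<Rightarrow> (nat \<Rightarrow> real) \<Rightarrow> (nat \<Rightarrow> real) \<Rightarrow> nat \<Rightarrow> nat \<Rightarrow> real" where
  "blockA m tr c s = (\<lambda>i j.
     if i < 2*m \<and> j < 2*m \<and> i div 2 = j div 2 then
       (if i = j then c (i div 2 + 1) else if even i then s (i div 2 + 1) else - s (i div 2 + 1))
     else if tr \<and> i = 2*m \<and> j = 2*m then 1 else 0)"

definition dimA :: "nat \<Rightarrow> bool \<Rightarrow> nat" where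
  "dimA m tr = 2*m + (if tr then 1 else 0)"

definition aci_half :: "nat \<Rightarrow> (nat \<Rightarrow> nat \<Rightarrow> real) \<Rightarrow> (nat \<Rightarrow> real) \<Rightarrow> real \<times> (nat \<Rightarrow> real)" where
  "aci_half n M v = (let a = vinner n v (matvec n M v);
                         wt = (\<lambda>i. matvec n M v i - a * v i)
                     in (a, (\<lambda>i. wt i / vnorm n wt)))"

fun aci_v :: "nat \<Rightarrow> (nat \<Rightarrow> nat \<Rightarrow> real) \<Rightarrow> (nat \<Rightarrow> real) \<Rightarrow> nat \<Rightarrow> (nat \<Rightarrow> real)" where
  "aci_v n M v0 0 = v0"
| "aci_v n M v0 (Suc k) =
     (let w = snd (aci_half n M (aci_v n M v0 k));
          b = vinner n w (matvec n M w);
          vt = (\<lambda>i. matvec n (transp M) w i - b * w i)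
      in (\<lambda>i. vt i / vnorm n vt))"

definition aci_alpha :: "nat \<Rightarrow> (nat \<Rightarrow> nat \<Rightarrow> real) \<Rightarrow> (nat \<Rightarrow> real) \<Rightarrow> nat \<Rightarrow> real" where
  "aci_alpha n M v0 k = fst (aci_half n M (aci_v n M v0 k))"

definition aci_w :: "nat \<Rightarrow> (nat \<Rightarrow> nat \<Rightarrow> real) \<Rightarrow> (nat \<Rightarrow> real) \<Rightarrow> nat \<Rightarrow> (nat \<Rightarrow> real)" where
  "aci_w n M v0 k = snd (aci_half n M (aci_v n M v0 k))"

definition aci_beta :: "nat \<Rightarrow> (nat \<Rightarrow> nat \<Rightarrow> real) \<Rightarrow> (nat \<Rightarrow> real) \<Rightarrow> nat \<Rightarrow> real" where
  "aci_beta n M v0 k = vinner n (aci_w n M v0 k) (matvec n M (aci_w n M v0 k))"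

end

theory Submission
  imports Defs "HOL-Analysis.Elementary_Normed_Spaces"
begin

text \<open>Each block \<open>G\<^sub>j\<close> acts as multiplication by \<open>e\<^sup>i\<^sup>\<theta>\<^sub>j\<close> with \<open>cos \<theta>\<^sub>j = c\<^sub>j\<close>, so \<open>A - a I\<close> and
  \<open>A\<^sup>T - a I\<close> multiply the squared norm of block \<open>j\<close> by \<open>1 - 2 a c\<^sub>j + a\<^sup>2\<close>, while the Rayleigh
  quotient of a unit vector lies in \<open>[c\<^sub>1, 1]\<close>.  For \<open>a \<ge> c\<^sub>1 > 0\<close> the factor of every block
  other than the first is at most \<open>\<rho> = 1 - c\<^sub>1 \<delta> < 1\<close> times that of the first block, where \<open>\<delta>\<close> is
  the gap between \<open>c\<^sub>1\<close> and the other cosines; the factor of the first block is positive because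
  \<open>s\<^sub>1 \<noteq> 0\<close>.  So every half step of ACI(1) shrinks the ratio of the squared norm outside the first
  block to that of the first block by \<open>\<rho>\<close>.  Hence the mass outside the first block tends to zero,
  and \<open>\<alpha>\<^sub>k, \<beta>\<^sub>k\<close> differ from \<open>c\<^sub>1\<close> by at most that mass.\<close>

lemma sum_lessThan_double:
  fixes F :: "nat \<Rightarrow> real"
  shows "(\<Sum>i<2*m. F i) = (\<Sum>j<m. F (2*j) + F (2*j+1))"
  by (induction m) (simp_all add: add.commute add.left_commute)

lemma sum_lessThan_dimA:
  fixes F :: "nat \<Rightarrow> real"
  shows "(\<Sum>i<dimA m tr. F i) = (\<Sum>j<m. F (2*j) + F (2*j+1)) + (if tr then F (2*m) else 0)"
  by (simp add: dimA_def sum_lessThan_double)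

lemma matvec_blockA_even:
  assumes "j < m"
  shows "matvec (dimA m tr) (blockA m tr c s) v (2*j) = c (j+1) * v (2*j) + s (j+1) * v (2*j+1)"
proof -
  have "matvec (dimA m tr) (blockA m tr c s) v (2*j) = (\<Sum>k<dimA m tr. blockA m tr c s (2*j) k * v k)"
    using assms by (simp add: matvec_def dimA_def)
  also have "\<dots> = (\<Sum>q<m. if q = j then c (j+1) * v (2*j) + s (j+1) * v (2*j+1) else 0) + 0"
    unfolding sum_lessThan_dimA using assms
    by (intro arg_cong2[where f="(+)"] sum.cong) (auto simp: blockA_def)
  finally show ?thesis using assms by simp
qed

lemma matvec_blockA_odd:
  assumes "j < m"
  shows "matvec (dimA m tr) (blockA m tr c s) v (Suc (2*j)) = - s (j+1) * v (2*j) + c (j+1) * v (2*j+1)"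
proof -
  have "matvec (dimA m tr) (blockA m tr c s) v (Suc (2*j)) = (\<Sum>k<dimA m tr. blockA m tr c s (2*j+1) k * v k)"
    using assms by (simp add: matvec_def dimA_def)
  also have "\<dots> = (\<Sum>q<m. if q = j then - s (j+1) * v (2*j) + c (j+1) * v (2*j+1) else 0) + 0"
    unfolding sum_lessThan_dimA using assms
    by (intro arg_cong2[where f="(+)"] sum.cong) (auto simp: blockA_def)
  finally show ?thesis using assms by simp
qed

lemma matvec_blockA_last:
  assumes tr
  shows "matvec (dimA m tr) (blockA m tr c s) v (2*m) = v (2*m)"
proof -
  have "matvec (dimA m tr) (blockA m tr c s) v (2*m) = (\<Sum>k<dimA m tr. blockA m tr c s (2*m) k * v k)"
    using assms by (simp add: matvec_def dimA_def)
  also have "\<dots> = v (2*m)"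
    unfolding sum_lessThan_dimA using assms by (auto simp: blockA_def)
  finally show ?thesis .
qed

lemma transp_blockA: "transp (blockA m tr c s) = blockA m tr c (\<lambda>j. - s j)"
  unfolding transp_def blockA_def by (intro ext) (auto dest: odd_two_times_div_two_succ)

definition block_cos :: "nat \<Rightarrow> (nat \<Rightarrow> real) \<Rightarrow> nat \<Rightarrow> real" where
  "block_cos m c i = (if i < 2*m then c (i div 2 + 1) else 1)"

lemma block_cos_even [simp]: "j < m \<Longrightarrow> block_cos m c (2*j) = c (j+1)"
  and block_cos_odd [simp]: "j < m \<Longrightarrow> block_cos m c (Suc (2*j)) = c (j+1)"
  and block_cos_last [simp]: "block_cos m c (2*m) = 1"
  by (simp_all add: block_cos_def)

lemma rayleigh_blockA:
  "vinner (dimA m tr) v (matvec (dimA m tr) (blockA m tr c s) v) = (\<Sum>i<dimA m tr. block_cos m c i * (v i)^2)"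
  unfolding vinner_def sum_lessThan_dimA
proof (rule arg_cong2[where f="(+)"], rule sum.cong, rule refl)
  fix j assume "j \<in> {..<m}"
  then show "v (2*j) * matvec (dimA m tr) (blockA m tr c s) v (2*j)
      + v (2*j+1) * matvec (dimA m tr) (blockA m tr c s) v (2*j+1)
      = block_cos m c (2*j) * (v (2*j))\<^sup>2 + block_cos m c (2*j+1) * (v (2*j+1))\<^sup>2"
    by (simp add: matvec_blockA_even matvec_blockA_odd power2_eq_square) algebra
qed (simp add: matvec_blockA_last power2_eq_square)

text \<open>For \<open>x = cos \<theta>\<close> this is \<open>|e\<^sup>i\<^sup>\<theta> - a|\<^sup>2\<close>.\<close>

definition rot_shift_sq :: "real \<Rightarrow> real \<Rightarrow> real" where
  "rot_shift_sq a x = 1 - 2*a*x + a^2"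

lemma rotation_shift_sq_norm:
  fixes c s x y a :: real
  assumes "c^2 + s^2 = 1"
  shows "(c*x + s*y - a*x)^2 + (- s*x + c*y - a*y)^2 = rot_shift_sq a c * (x^2 + y^2)"
proof -
  have "(c*x + s*y - a*x)^2 + (- s*x + c*y - a*y)^2 = (c^2 + s^2 - 2*a*c + a^2) * (x^2 + y^2)"
    by (simp add: algebra_simps power2_eq_square)
  then show ?thesis using assms by (simp add: rot_shift_sq_def)
qed

lemma weighted_residual_blockA:
  assumes cs: "\<And>j. j \<in> {1..m} \<Longrightarrow> (c j)^2 + (s j)^2 = 1"
    and h_blockwise: "\<And>j. j < m \<Longrightarrow> h (2*j) = h (2*j+1)"
  shows "(\<Sum>i<dimA m tr. h i * (matvec (dimA m tr) (blockA m tr c s) v i - a * v i)^2)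
       = (\<Sum>i<dimA m tr. h i * rot_shift_sq a (block_cos m c i) * (v i)^2)"
  unfolding sum_lessThan_dimA
proof (rule arg_cong2[where f="(+)"], rule sum.cong, rule refl)
  fix j assume "j \<in> {..<m}"
  then have j: "j < m" by simp
  have "(c (j+1))^2 + (s (j+1))^2 = 1" using cs j by simp
  let ?x = "v (2*j)" and ?y = "v (2*j+1)"
  have "h (2*j) * (matvec (dimA m tr) (blockA m tr c s) v (2*j) - a * ?x)\<^sup>2 +
        h (2*j+1) * (matvec (dimA m tr) (blockA m tr c s) v (2*j+1) - a * ?y)\<^sup>2
      = h (2*j) * ((c (j+1) * ?x + s (j+1) * ?y - a * ?x)\<^sup>2 + (- s (j+1) * ?x + c (j+1) * ?y - a * ?y)\<^sup>2)"
    using j h_blockwise[OF j] by (simp add: matvec_blockA_even matvec_blockA_odd distrib_left)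
  also have "\<dots> = h (2*j) * (rot_shift_sq a (c (j+1)) * (?x\<^sup>2 + ?y\<^sup>2))"
    using rotation_shift_sq_norm[OF \<open>(c (j+1))^2 + (s (j+1))^2 = 1\<close>, of ?x ?y a] by simp
  finally show "h (2*j) * (matvec (dimA m tr) (blockA m tr c s) v (2*j) - a * ?x)\<^sup>2 +
        h (2*j+1) * (matvec (dimA m tr) (blockA m tr c s) v (2*j+1) - a * ?y)\<^sup>2 =
        h (2*j) * rot_shift_sq a (block_cos m c (2*j)) * ?x\<^sup>2 +
        h (2*j+1) * rot_shift_sq a (block_cos m c (2*j+1)) * ?y\<^sup>2"
    using j h_blockwise[OF j] by (simp add: distrib_left mult.assoc)
qed (cases tr, simp_all add: matvec_blockA_last rot_shift_sq_def power2_eq_square, simp add: algebra_simps)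

lemma weighted_sum_normalized:
  assumes "0 < vinner n u u"
  shows "(\<Sum>i<n. h i * (u i / vnorm n u)^2) = (\<Sum>i<n. h i * (u i)^2) / vinner n u u"
proof -
  have "(vnorm n u)^2 = vinner n u u" unfolding vnorm_def using assms by simp
  then show ?thesis by (simp add: power_divide sum_divide_distrib)
qed

lemma vinner_self_eq_sum: "vinner n v v = (\<Sum>i<n. 1 * (v i)^2)"
  by (simp add: vinner_def power2_eq_square)

locale aci_rotation_blocks =
  fixes m :: nat and tr :: bool and c s :: "nat \<Rightarrow> real"
  assumes m_pos: "m \<ge> 1"
    and cs: "\<And>j. j \<in> {1..m} \<Longrightarrow> (c j)^2 + (s j)^2 = 1"
    and s_nonzero: "\<And>j. j \<in> {1..m} \<Longrightarrow> s j \<noteq> 0"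
    and c1_pos: "0 < c 1"
    and c_strict_mono: "\<And>i j. i \<in> {1..m} \<Longrightarrow> j \<in> {1..m} \<Longrightarrow> i < j \<Longrightarrow> c i < c j"
begin

abbreviation "n \<equiv> dimA m tr"
abbreviation "A \<equiv> blockA m tr c s"

definition head_sq :: "(nat \<Rightarrow> real) \<Rightarrow> real" where
  "head_sq v = (\<Sum>i<n. (if i < 2 then 1 else 0) * (v i)^2)"

definition tail_sq :: "(nat \<Rightarrow> real) \<Rightarrow> real" where
  "tail_sq v = (\<Sum>i<n. (if 2 \<le> i then 1 else 0) * (v i)^2)"

definition tail_ratio :: "(nat \<Rightarrow> real) \<Rightarrow> real" where
  "tail_ratio v = tail_sq v / head_sq v"

definition gap :: real where
  "gap = (if m \<ge> 2 then min (c 2 - c 1) (1 - c 1) else 1 - c 1)"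

definition rate :: real where
  "rate = 1 - c 1 * gap"

lemma n_ge_2: "2 \<le> n"
  using m_pos by (simp add: dimA_def)

lemma head_sq_eq: "head_sq v = (v 0)^2 + (v 1)^2"
proof -
  have "head_sq v = sum (\<lambda>i. (v i)^2) ({..<n} \<inter> {..<2})"
    unfolding head_sq_def sum.inter_restrict[OF finite_lessThan] by (intro sum.cong) auto
  also have "{..<n} \<inter> {..<2} = {..<2::nat}" using n_ge_2 by auto
  finally show ?thesis by (simp add: numeral_2_eq_2)
qed

lemma head_sq_plus_tail_sq: "head_sq v + tail_sq v = vinner n v v"
  unfolding head_sq_def tail_sq_def vinner_self_eq_sum sum.distrib[symmetric]
  by (rule sum.cong) auto

lemma tail_sq_nonneg: "0 \<le> tail_sq v"
  unfolding tail_sq_def by (rule sum_nonneg) auto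

lemma tail_sq_le_tail_ratio:
  assumes "vinner n v v = 1" "0 < head_sq v"
  shows "tail_sq v \<le> tail_ratio v"
proof -
  have "head_sq v \<le> 1" using head_sq_plus_tail_sq[of v] tail_sq_nonneg[of v] assms by linarith
  then have "tail_sq v * head_sq v \<le> tail_sq v"
    using tail_sq_nonneg[of v] by (simp add: mult_left_le)
  then show ?thesis unfolding tail_ratio_def using assms(2) by (simp add: le_divide_eq)
qed

lemma c1_less_1: "c 1 < 1"
proof -
  have "(c 1)^2 + (s 1)^2 = 1" "s 1 \<noteq> 0" using cs s_nonzero m_pos by auto
  then have "(c 1)^2 < 1" by (smt (verit) zero_less_power2)
  then show ?thesis using c1_pos by (smt (verit) one_le_power)
qed

lemma block_cos_between: "c 1 \<le> block_cos m c i \<and> block_cos m c i \<le> 1"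
proof (cases "i < 2*m")
  case True
  define j where "j = i div 2 + 1"
  have j: "j \<in> {1..m}" using True unfolding j_def by auto
  have "c 1 \<le> c j" using c_strict_mono[of 1 j] j by (cases "j = 1") auto
  moreover have "(c j)^2 \<le> 1" using cs[OF j] by (smt (verit) zero_le_power2)
  then have "c j \<le> 1" using abs_square_le_1 abs_le_D1 by blast
  ultimately show ?thesis using True unfolding block_cos_def j_def by simp
qed (use c1_less_1 in \<open>simp add: block_cos_def\<close>)

lemma block_cos_head: "i < 2 \<Longrightarrow> block_cos m c i = c 1"
  using m_pos unfolding block_cos_def by auto

lemma gap_pos: "0 < gap" and gap_le: "gap \<le> 1 - c 1"
  using c_strict_mono[of 1 2] c1_less_1 unfolding gap_def by auto

lemma block_cos_tail: "2 \<le> i \<Longrightarrow> c 1 + gap \<le> block_cos m c i"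
proof (cases "i < 2*m")
  case True
  assume i: "2 \<le> i"
  define j where "j = i div 2 + 1"
  have j: "2 \<le> j" "j \<le> m" using i True unfolding j_def by auto
  have "c 2 \<le> c j" using c_strict_mono[of 2 j] j by (cases "j = 2") auto
  moreover have "c 1 + gap \<le> c 2" using j unfolding gap_def by auto
  ultimately show ?thesis using True unfolding block_cos_def j_def by simp
qed (use gap_le in \<open>simp add: block_cos_def\<close>)

lemma rate_nonneg: "0 \<le> rate"
proof -
  have "c 1 * gap \<le> 1 * 1" using c1_pos gap_pos gap_le c1_less_1 by (intro mult_mono) auto
  then show ?thesis unfolding rate_def by simp
qed

lemma rate_less_1: "rate < 1"
  unfolding rate_def using c1_pos gap_pos by simp

lemma rate_power_tendsto_zero: "(\<lambda>k. rate^(2*k+j) * q) \<longlonglongrightarrow> 0"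
proof -
  have "(\<lambda>k. (rate^2)^k) \<longlonglongrightarrow> 0"
    using rate_nonneg rate_less_1 by (intro LIMSEQ_power_zero) (simp add: abs_square_less_1)
  then have "(\<lambda>k. (rate^2)^k * (rate^j * q)) \<longlonglongrightarrow> 0 * (rate^j * q)" by (intro tendsto_mult) auto
  then show ?thesis by (simp add: power_add power_mult mult.assoc)
qed

lemma rot_shift_sq_c1_pos: "0 < rot_shift_sq a (c 1)"
proof -
  have "(c 1)^2 + (s 1)^2 = 1" "s 1 \<noteq> 0" using cs s_nonzero m_pos by auto
  then have "rot_shift_sq a (c 1) = (a - c 1)^2 + (s 1)^2"
    unfolding rot_shift_sq_def by (simp add: power2_eq_square algebra_simps)
  then show ?thesis using \<open>s 1 \<noteq> 0\<close> by (smt (verit) zero_le_power2 zero_less_power2)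
qed

lemma rot_shift_sq_tail_le:
  assumes a: "c 1 \<le> a" "a \<le> 1" and x: "c 1 + gap \<le> x"
  shows "rot_shift_sq a x \<le> rate * rot_shift_sq a (c 1)"
proof -
  have "c 1 * gap \<le> a * (x - c 1)"
    using a x gap_pos c1_pos by (intro mult_mono) auto
  then have "rot_shift_sq a x \<le> rot_shift_sq a (c 1) - 2 * c 1 * gap"
    unfolding rot_shift_sq_def by (simp add: algebra_simps)
  also have "\<dots> \<le> rate * rot_shift_sq a (c 1)"
  proof -
    have "rot_shift_sq a (c 1) \<le> 2" unfolding rot_shift_sq_def using a c1_pos
      by (smt (verit) mult_nonneg_nonneg power_le_one)
    then have "c 1 * gap * rot_shift_sq a (c 1) \<le> c 1 * gap * 2"
      using c1_pos gap_pos by (intro mult_left_mono) auto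
    then show ?thesis unfolding rate_def by (simp add: algebra_simps)
  qed
  finally show ?thesis .
qed

lemma rayleigh_between:
  assumes "vinner n v v = 1"
  shows "c 1 \<le> (\<Sum>i<n. block_cos m c i * (v i)^2) \<and> (\<Sum>i<n. block_cos m c i * (v i)^2) \<le> 1"
proof -
  have unit: "(\<Sum>i<n. (v i)^2) = 1" using assms by (simp add: vinner_self_eq_sum)
  have "c 1 = (\<Sum>i<n. c 1 * (v i)^2)" using unit by (simp add: sum_distrib_left[symmetric])
  also have "\<dots> \<le> (\<Sum>i<n. block_cos m c i * (v i)^2)"
    using block_cos_between by (intro sum_mono mult_right_mono) auto
  finally have "c 1 \<le> (\<Sum>i<n. block_cos m c i * (v i)^2)" .
  moreover have "(\<Sum>i<n. block_cos m c i * (v i)^2) \<le> (\<Sum>i<n. 1 * (v i)^2)"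
    using block_cos_between by (intro sum_mono mult_right_mono) auto
  ultimately show ?thesis using unit by simp
qed

lemma rayleigh_dist_c1_le_tail_sq:
  assumes "vinner n v v = 1"
  shows "\<bar>(\<Sum>i<n. block_cos m c i * (v i)^2) - c 1\<bar> \<le> tail_sq v"
proof -
  have "(\<Sum>i<n. block_cos m c i * (v i)^2) - c 1 = (\<Sum>i<n. (block_cos m c i - c 1) * (v i)^2)"
    using assms by (simp add: vinner_self_eq_sum algebra_simps sum_subtractf sum_distrib_left[symmetric])
  moreover have "0 \<le> (\<Sum>i<n. (block_cos m c i - c 1) * (v i)^2)"
    using block_cos_between by (intro sum_nonneg mult_nonneg_nonneg) auto
  moreover have "(\<Sum>i<n. (block_cos m c i - c 1) * (v i)^2) \<le> tail_sq v"
    unfolding tail_sq_def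
  proof (rule sum_mono)
    fix i
    have "block_cos m c i - c 1 \<le> (if 2 \<le> i then 1 else 0)"
      using block_cos_between[of i] block_cos_head[of i] c1_pos by auto
    then show "(block_cos m c i - c 1) * (v i)\<^sup>2 \<le> (if 2 \<le> i then 1 else 0) * (v i)\<^sup>2"
      by (intro mult_right_mono) auto
  qed
  ultimately show ?thesis by simp
qed

text \<open>One half step of ACI(1), with \<open>s'\<close> either \<open>s\<close> (for \<open>A\<close>) or \<open>-s\<close> (for \<open>A\<^sup>T\<close>); the shift is
  always the Rayleigh quotient with respect to \<open>A\<close>, which is also the one with respect to \<open>A\<^sup>T\<close>.\<close>

lemma shifted_normalized_contracts:
  assumes cs': "\<And>j. j \<in> {1..m} \<Longrightarrow> (c j)^2 + (s' j)^2 = 1"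
    and unit: "vinner n v v = 1" and head_pos: "0 < head_sq v"
    and a: "a = (\<Sum>i<n. block_cos m c i * (v i)^2)"
    and u: "u = (\<lambda>i. matvec n (blockA m tr c s') v i - a * v i)"
    and v': "v' = (\<lambda>i. u i / vnorm n u)"
  shows "vinner n v' v' = 1 \<and> 0 < head_sq v' \<and> tail_ratio v' \<le> rate * tail_ratio v"
proof -
  have a_between: "c 1 \<le> a" "a \<le> 1" using rayleigh_between[OF unit] a by auto
  let ?f = "rot_shift_sq a (c 1)"
  have f_pos: "0 < ?f" by (rule rot_shift_sq_c1_pos)
  have head_u: "head_sq u = ?f * head_sq v"
  proof -
    have "head_sq u = (\<Sum>i<n. (if i < 2 then 1 else 0) * rot_shift_sq a (block_cos m c i) * (v i)^2)"
      unfolding head_sq_def u by (rule weighted_residual_blockA[OF cs']) auto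
    also have "\<dots> = (\<Sum>i<n. ?f * ((if i < 2 then 1 else 0) * (v i)^2))"
      by (rule sum.cong) (auto simp: block_cos_head)
    finally show ?thesis unfolding head_sq_def by (simp add: sum_distrib_left)
  qed
  have tail_u: "tail_sq u \<le> rate * ?f * tail_sq v"
  proof -
    have "tail_sq u = (\<Sum>i<n. (if 2 \<le> i then 1 else 0) * rot_shift_sq a (block_cos m c i) * (v i)^2)"
      unfolding tail_sq_def u by (rule weighted_residual_blockA[OF cs']) auto
    also have "\<dots> \<le> (\<Sum>i<n. rate * ?f * ((if 2 \<le> i then 1 else 0) * (v i)^2))"
      using rot_shift_sq_tail_le[OF a_between block_cos_tail]
      by (intro sum_mono) (auto intro!: mult_right_mono)
    finally show ?thesis unfolding tail_sq_def by (simp add: sum_distrib_left)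
  qed
  have head_u_pos: "0 < head_sq u" using head_u f_pos head_pos by simp
  have u_pos: "0 < vinner n u u" using head_sq_plus_tail_sq[of u] tail_sq_nonneg[of u] head_u_pos by linarith
  have head_v': "head_sq v' = head_sq u / vinner n u u"
    unfolding head_sq_def v' by (rule weighted_sum_normalized[OF u_pos])
  have tail_v': "tail_sq v' = tail_sq u / vinner n u u"
    unfolding tail_sq_def v' by (rule weighted_sum_normalized[OF u_pos])
  have unit_v': "vinner n v' v' = 1"
    unfolding vinner_self_eq_sum v' weighted_sum_normalized[OF u_pos] using u_pos by (simp add: vinner_self_eq_sum)
  have "tail_ratio v' = tail_sq u / head_sq u"
    unfolding tail_ratio_def head_v' tail_v' using u_pos by simp
  also have "\<dots> \<le> rate * ?f * tail_sq v / head_sq u"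
    using tail_u head_u_pos by (simp add: divide_right_mono)
  also have "\<dots> = rate * tail_ratio v" unfolding tail_ratio_def using head_u f_pos by simp
  finally show ?thesis using unit_v' head_v' head_u_pos u_pos by simp
qed

lemma aci_w_contracts:
  assumes "vinner n (aci_v n A v0 k) (aci_v n A v0 k) = 1" "0 < head_sq (aci_v n A v0 k)"
  shows "vinner n (aci_w n A v0 k) (aci_w n A v0 k) = 1 \<and> 0 < head_sq (aci_w n A v0 k)
     \<and> tail_ratio (aci_w n A v0 k) \<le> rate * tail_ratio (aci_v n A v0 k)"
  by (rule shifted_normalized_contracts[OF cs assms rayleigh_blockA[where s=s] refl])
    (simp_all add: aci_w_def aci_half_def Let_def)

lemma aci_v_Suc_contracts:
  assumes "vinner n (aci_w n A v0 k) (aci_w n A v0 k) = 1" "0 < head_sq (aci_w n A v0 k)"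
  shows "vinner n (aci_v n A v0 (Suc k)) (aci_v n A v0 (Suc k)) = 1 \<and> 0 < head_sq (aci_v n A v0 (Suc k))
     \<and> tail_ratio (aci_v n A v0 (Suc k)) \<le> rate * tail_ratio (aci_w n A v0 k)"
  by (rule shifted_normalized_contracts[of "\<lambda>j. - s j", OF _ assms rayleigh_blockA[where s=s] refl])
    (simp_all add: cs aci_w_def aci_half_def Let_def transp_blockA)

lemma aci_tail_ratio_decay:
  assumes "vinner n v0 v0 = 1" "0 < head_sq v0"
  shows "vinner n (aci_v n A v0 k) (aci_v n A v0 k) = 1 \<and> 0 < head_sq (aci_v n A v0 k)
     \<and> tail_ratio (aci_v n A v0 k) \<le> rate^(2*k) * tail_ratio v0
     \<and> vinner n (aci_w n A v0 k) (aci_w n A v0 k) = 1 \<and> 0 < head_sq (aci_w n A v0 k)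
     \<and> tail_ratio (aci_w n A v0 k) \<le> rate^(2*k+1) * tail_ratio v0"
proof (induction k)
  case 0
  then show ?case using aci_w_contracts[of v0 0] assms by simp
next
  case (Suc k)
  let ?w = "aci_w n A v0 k" and ?v' = "aci_v n A v0 (Suc k)" and ?w' = "aci_w n A v0 (Suc k)"
  have w: "vinner n ?w ?w = 1" "0 < head_sq ?w" "tail_ratio ?w \<le> rate^(2*k+1) * tail_ratio v0"
    using Suc.IH by blast+
  have v': "vinner n ?v' ?v' = 1" "0 < head_sq ?v'" "tail_ratio ?v' \<le> rate * tail_ratio ?w"
    using aci_v_Suc_contracts[OF w(1,2)] by blast+
  have w': "vinner n ?w' ?w' = 1" "0 < head_sq ?w'" "tail_ratio ?w' \<le> rate * tail_ratio ?v'"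
    using aci_w_contracts[OF v'(1,2)] by blast+
  have "tail_ratio ?v' \<le> rate^(2*Suc k) * tail_ratio v0"
    using order_trans[OF v'(3) mult_left_mono[OF w(3) rate_nonneg]] by (simp add: mult.assoc)
  moreover from this have "tail_ratio ?w' \<le> rate^(2*Suc k+1) * tail_ratio v0"
    using order_trans[OF w'(3) mult_left_mono[OF _ rate_nonneg]] by (simp add: mult.assoc)
  ultimately show ?case using v' w' by blast
qed

context
  fixes v0 :: "nat \<Rightarrow> real"
  assumes unit: "vinner n v0 v0 = 1" and head_pos: "0 < head_sq v0"
begin

lemma aci_v_tail_sq_le: "tail_sq (aci_v n A v0 k) \<le> rate^(2*k) * tail_ratio v0"
  using tail_sq_le_tail_ratio[of "aci_v n A v0 k"] aci_tail_ratio_decay[OF unit head_pos, of k] by linarith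

lemma aci_w_tail_sq_le: "tail_sq (aci_w n A v0 k) \<le> rate^(2*k+1) * tail_ratio v0"
  using tail_sq_le_tail_ratio[of "aci_w n A v0 k"] aci_tail_ratio_decay[OF unit head_pos, of k] by linarith

lemma aci_alpha_tendsto: "aci_alpha n A v0 \<longlonglongrightarrow> c 1"
proof (rule LIM_zero_cancel, rule Lim_null_comparison[OF always_eventually rate_power_tendsto_zero[of 0]], rule allI)
  fix k
  have "aci_alpha n A v0 k = (\<Sum>i<n. block_cos m c i * (aci_v n A v0 k i)^2)"
    by (simp add: aci_alpha_def aci_half_def Let_def rayleigh_blockA)
  then show "norm (aci_alpha n A v0 k - c 1) \<le> rate^(2*k+0) * tail_ratio v0"
    using rayleigh_dist_c1_le_tail_sq aci_tail_ratio_decay[OF unit head_pos, of k] aci_v_tail_sq_le[of k]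
    by fastforce
qed

lemma aci_beta_tendsto: "aci_beta n A v0 \<longlonglongrightarrow> c 1"
proof (rule LIM_zero_cancel, rule Lim_null_comparison[OF always_eventually rate_power_tendsto_zero[of 1]], rule allI)
  fix k
  have "aci_beta n A v0 k = (\<Sum>i<n. block_cos m c i * (aci_w n A v0 k i)^2)"
    by (simp add: aci_beta_def rayleigh_blockA)
  then show "norm (aci_beta n A v0 k - c 1) \<le> rate^(2*k+1) * tail_ratio v0"
    using rayleigh_dist_c1_le_tail_sq aci_tail_ratio_decay[OF unit head_pos, of k] aci_w_tail_sq_le[of k]
    by fastforce
qed

lemma aci_v_tail_sq_tendsto: "(\<lambda>k. tail_sq (aci_v n A v0 k)) \<longlonglongrightarrow> 0"
  using aci_v_tail_sq_le tail_sq_nonneg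
  by (intro Lim_null_comparison[OF always_eventually rate_power_tendsto_zero[of 0]]) auto

lemma aci_v_limit_point:
  assumes r: "strict_mono r" and lim: "\<forall>i < n. (\<lambda>k. aci_v n A v0 (r k) i) \<longlonglongrightarrow> vs i"
  shows "(\<forall>i. 2 \<le> i \<and> i < n \<longrightarrow> vs i = 0) \<and> (vs 0)^2 + (vs 1)^2 = 1"
proof
  let ?v = "\<lambda>k. aci_v n A v0 (r k)"
  have tail: "(\<lambda>k. tail_sq (?v k)) \<longlonglongrightarrow> 0"
    using LIMSEQ_subseq_LIMSEQ[OF aci_v_tail_sq_tendsto r] by (simp add: o_def)
  show "\<forall>i. 2 \<le> i \<and> i < n \<longrightarrow> vs i = 0"
  proof (intro allI impI)
    fix i assume i: "2 \<le> i \<and> i < n"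
    have "(\<lambda>k. (?v k i)^2) \<longlonglongrightarrow> 0"
    proof (rule Lim_null_comparison[OF always_eventually tail], rule allI)
      fix k
      have "(if 2 \<le> i then 1 else 0) * (?v k i)^2 \<le> tail_sq (?v k)"
        unfolding tail_sq_def using i by (intro member_le_sum) auto
      then show "norm ((?v k i)^2) \<le> tail_sq (?v k)" using i by simp
    qed
    moreover have "(\<lambda>k. (?v k i)^2) \<longlonglongrightarrow> (vs i)^2" using lim i by (intro tendsto_power) auto
    ultimately show "vs i = 0" using LIMSEQ_unique by fastforce
  qed
  have "head_sq (?v k) = 1 - tail_sq (?v k)" for k
    using head_sq_plus_tail_sq[of "?v k"] aci_tail_ratio_decay[OF unit head_pos, of "r k"] by linarith
  then have "(\<lambda>k. head_sq (?v k)) \<longlonglongrightarrow> 1" using tendsto_diff[OF tendsto_const tail, of 1] by simp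
  moreover have "(\<lambda>k. head_sq (?v k)) \<longlonglongrightarrow> (vs 0)^2 + (vs 1)^2"
    unfolding head_sq_eq using lim n_ge_2 by (intro tendsto_add tendsto_power) auto
  ultimately show "(vs 0)^2 + (vs 1)^2 = 1" using LIMSEQ_unique by blast
qed

end

end

theorem lemma4p5:
  fixes m :: nat and tr :: bool and c s :: "nat \<Rightarrow> real" and v0 :: "nat \<Rightarrow> real"
  assumes m1: "m \<ge> 1"
    and cs: "\<And>j. j \<in> {1..m} \<Longrightarrow> (c j)^2 + (s j)^2 = 1"
    and snz: "\<And>j. j \<in> {1..m} \<Longrightarrow> s j \<noteq> 0"
    and c1pos: "0 < c 1"
    and cmono: "\<And>i j. i \<in> {1..m} \<Longrightarrow> j \<in> {1..m} \<Longrightarrow> i < j \<Longrightarrow> c i < c j"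
    and unit: "vnorm (dimA m tr) v0 = 1"
    and grade2: "grade (dimA m tr) (blockA m tr c s) v0 \<ge> 2"
    and blk1: "(v0 0, v0 1) \<noteq> (0, 0)"
  shows "aci_alpha (dimA m tr) (blockA m tr c s) v0 \<longlonglongrightarrow> c 1
       \<and> aci_beta (dimA m tr) (blockA m tr c s) v0 \<longlonglongrightarrow> c 1
       \<and> (\<forall>vs :: nat \<Rightarrow> real. \<forall>r :: nat \<Rightarrow> nat.
            strict_mono r \<and> (\<forall>i < dimA m tr. (\<lambda>k. aci_v (dimA m tr) (blockA m tr c s) v0 (r k) i) \<longlonglongrightarrow> vs i)
            \<longrightarrow> (\<forall>i. 2 \<le> i \<and> i < dimA m tr \<longrightarrow> vs i = 0) \<and> sqrt ((vs 0)^2 + (vs 1)^2) = 1)"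
proof -
  interpret aci_rotation_blocks m tr c s
    using m1 cs snz c1pos cmono by unfold_locales auto
  have v0_unit: "vinner (dimA m tr) v0 v0 = 1" using unit unfolding vnorm_def by simp
  have "0 < (v0 0)^2 + (v0 1)^2" using blk1 by (simp add: sum_power2_gt_zero_iff)
  then have v0_head: "0 < head_sq v0" by (simp add: head_sq_eq)
  show ?thesis
    using aci_alpha_tendsto[OF v0_unit v0_head] aci_beta_tendsto[OF v0_unit v0_head]
      aci_v_limit_point[OF v0_unit v0_head] by (simp; blast)
qed

end
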